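(* Let $d\ge3$ be an integer, $p_1,\dots,p_d\in(0,1)$, $q_j=1-p_j$, $P=\prod_{j=1}^dp_jq_j^{-1}$, and $\lambda\in(0,1)$. For every integer $n\ge N(P^{1/d},\lambda)$, $$\sum_{k=0}^n\binom nk^dP^k\le\left(\frac{M(P^{1/d},\lambda)}{\sqrt{2\pi}}\right)^{d-1}n^{-\frac{d-1}{2}}\left(1+P^{1/d}\right)^{dn}.$$
   Context: For $\alpha>0$, $\lambda\in(0,1)$: $N(\alpha,\lambda)=\max\{[\alpha/\lambda]+1,[1/(\lambda\alpha)]+1\}$, where $[x]$ is the greatest integer $\le x$, and $M(\alpha,\lambda)=\frac{\alpha+1}{\sqrt\alpha}\cdot\frac1{1-\lambda}$. *)

theory Defs
  imports Complex_Main
begin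

definition N_bound :: "real \<Rightarrow> real \<Rightarrow> nat" where
  "N_bound \<alpha> lam = nat (max (\<lfloor>\<alpha> / lam\<rfloor> + 1) (\<lfloor>1 / (lam * \<alpha>)\<rfloor> + 1))"

definition M_bound :: "real \<Rightarrow> real \<Rightarrow> real" where
  "M_bound \<alpha> lam = (\<alpha> + 1) / sqrt \<alpha> * (1 / (1 - lam))"

end

theory Submission
  imports Defs "HOL-Analysis.Gamma_Function"
begin

(* With a = P^(1/d) and c_k = (n choose k) a^k the sum is sum_k c_k^d, which is at most
   (max_k c_k)^(d-1) * sum_k c_k = (max_k c_k)^(d-1) (1 + a)^n.  The largest term sits at the
   mode m = floor ((n+1) a / (1+a)).  Stirling's formula with explicit error,
   sqrt (2 pi n) (n/e)^n <= n! <= sqrt (2 pi n) (n/e)^n e^(1/(12n)), together with Gibbs'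
   inequality gives c_m <= e^(1/(12n)) sqrt (n / (2 pi m (n-m))) (1+a)^n, and n >= N(a,lambda)
   keeps m far enough from 0 and n for this to be at most M(a,lambda) / sqrt (2 pi n) (1+a)^n.
   For the Stirling bounds, s_n = ln n! - (n + 1/2) ln n + n decreases and s_n - 1/(12n)
   increases (both from the series of artanh), and lim s_n = ln (2 pi) / 2 by Wallis' product. *)

lemma DERIV_ln_ratio_minus_linear:
  fixes t :: real assumes "\<bar>t\<bar> < 1"
  shows "((\<lambda>t. ln (1 + t) - ln (1 - t) - 2 * t) has_real_derivative 2 * t^2 / (1 - t^2)) (at t)"
proof -
  have "1 - t^2 = (1 + t) * (1 - t)" by (simp add: algebra_simps power2_eq_square)
  then show ?thesis
    using assms by (auto intro!: derivative_eq_intros simp: field_simps power2_eq_square)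
qed

lemma ln_ratio_lower_bound:
  fixes x :: real assumes "0 \<le> x" "x < 1"
  shows "2 * x \<le> ln (1 + x) - ln (1 - x)"
proof -
  let ?h = "\<lambda>t::real. ln (1 + t) - ln (1 - t) - 2 * t"
  have "?h 0 \<le> ?h x"
  proof (rule DERIV_nonneg_imp_nondecreasing[OF assms(1)])
    fix t :: real assume "0 \<le> t" "t \<le> x"
    with assms have "\<bar>t\<bar> < 1" "t^2 < 1" by (auto simp: abs_square_less_1)
    then show "\<exists>y. (?h has_real_derivative y) (at t) \<and> 0 \<le> y"
      using DERIV_ln_ratio_minus_linear by force
  qed
  then show ?thesis by simp
qed

lemma ln_ratio_upper_bound:
  fixes x :: real assumes "0 \<le> x" "x < 1"
  shows "ln (1 + x) - ln (1 - x) \<le> 2 * x + 2 * x^3 / (3 * (1 - x^2))"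
proof -
  have x2: "x^2 < 1" using assms by (simp add: abs_square_less_1)
  define c where "c = 2 / (3 * (1 - x^2))"
  let ?h = "\<lambda>t::real. ln (1 + t) - ln (1 - t) - 2 * t - c * t^3"
  have "?h x \<le> ?h 0"
  proof (rule DERIV_nonpos_imp_nonincreasing[OF assms(1)])
    fix t :: real assume t: "0 \<le> t" "t \<le> x"
    with assms have "\<bar>t\<bar> < 1" by auto
    have "((\<lambda>t. c * t^3) has_real_derivative c * (3 * t^2)) (at t)"
      by (auto intro!: derivative_eq_intros)
    with \<open>\<bar>t\<bar> < 1\<close> have "(?h has_real_derivative 2 * t^2 / (1 - t^2) - c * (3 * t^2)) (at t)"
      by (intro DERIV_diff DERIV_ln_ratio_minus_linear)
    moreover have "2 * t^2 / (1 - t^2) \<le> c * (3 * t^2)"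
    proof -
      have "1 - x^2 \<le> 1 - t^2" using t by (simp add: power_mono)
      then have "2 * t^2 / (1 - t^2) \<le> 2 * t^2 / (1 - x^2)"
        using x2 by (intro divide_left_mono) auto
      also have "\<dots> = c * (3 * t^2)"
        using x2 by (simp add: c_def field_simps)
      finally show ?thesis .
    qed
    ultimately show "\<exists>y. (?h has_real_derivative y) (at t) \<and> y \<le> 0" by force
  qed
  then show ?thesis by (simp add: c_def)
qed

lemma ln_Suc_ratio_bounds:
  fixes x :: real assumes "0 < x"
  shows "1 \<le> (x + 1/2) * (ln (x + 1) - ln x)"
    and "(x + 1/2) * (ln (x + 1) - ln x) \<le> 1 + 1 / (12 * x * (x + 1))"
proof -
  \<comment> \<open>with this choice (1 + y) / (1 - y) = (x + 1) / x\<close>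
  define y where "y = 1 / (2 * x + 1)"
  have y: "0 \<le> y" "y < 1" "0 < y" using assms by (auto simp: y_def field_simps)
  have factor: "1 + y = (2 * y) * (x + 1)" "1 - y = (2 * y) * x"
    using assms by (simp_all add: y_def field_simps)
  have ln_eq: "ln (1 + y) - ln (1 - y) = ln (x + 1) - ln x"
    unfolding factor using assms y by (simp add: ln_mult)
  have lin: "(x + 1/2) * (2 * y) = 1" using assms by (simp add: y_def field_simps)
  have "1 - y^2 = (1 + y) * (1 - y)" by (simp add: algebra_simps power2_eq_square)
  also have "\<dots> = y^2 * (4 * x * (x + 1))" unfolding factor by (simp add: power2_eq_square)
  finally have "(x + 1/2) * (2 * y^3 / (3 * (1 - y^2)))
      = ((x + 1/2) * (2 * y)) * (y^2 / (3 * (y^2 * (4 * x * (x + 1)))))"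
    by (simp add: power2_eq_square power3_eq_cube algebra_simps)
  also have "\<dots> = 1 / (12 * x * (x + 1))"
    using y lin by simp
  finally have cubic: "(x + 1/2) * (2 * y^3 / (3 * (1 - y^2))) = 1 / (12 * x * (x + 1))" .
  show "1 \<le> (x + 1/2) * (ln (x + 1) - ln x)"
    using mult_left_mono[OF ln_ratio_lower_bound[OF y(1,2)], of "x + 1/2"] assms lin ln_eq
    by simp
  show "(x + 1/2) * (ln (x + 1) - ln x) \<le> 1 + 1 / (12 * x * (x + 1))"
    using mult_left_mono[OF ln_ratio_upper_bound[OF y(1,2)], of "x + 1/2"] assms lin cubic ln_eq
    by (simp add: distrib_left)
qed

definition stirling_remainder :: "nat \<Rightarrow> real" where
  "stirling_remainder n = ln (fact n) - (real n + 1/2) * ln (real n) + real n"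

lemma stirling_remainder_diff:
  "stirling_remainder n - stirling_remainder (Suc n)
     = (real n + 1/2) * (ln (real n + 1) - ln (real n)) - 1"
proof -
  have "(fact (Suc n) :: real) = (real n + 1) * fact n" by (simp add: fact_Suc)
  then have "ln (fact (Suc n) :: real) = ln (real n + 1) + ln (fact n)" by (simp add: ln_mult)
  then show ?thesis by (simp add: stirling_remainder_def algebra_simps)
qed

lemma decseq_stirling_remainder: "decseq (\<lambda>n. stirling_remainder (Suc n))"
proof (rule decseq_SucI)
  fix n
  show "stirling_remainder (Suc (Suc n)) \<le> stirling_remainder (Suc n)"
    using ln_Suc_ratio_bounds(1)[of "real (Suc n)"] stirling_remainder_diff[of "Suc n"] by simp
qed

lemma incseq_stirling_remainder_minus:
  "incseq (\<lambda>n. stirling_remainder (Suc n) - 1 / (12 * real (Suc n)))"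
proof (rule incseq_SucI)
  fix n
  have "1 / (12 * x * (x + 1)) = 1 / (12 * x) - 1 / (12 * (x + 1))" if "x > 0" for x :: real
    using that by (simp add: field_simps)
  from this[of "real (Suc n)"]
  have "1 / (12 * real (Suc n) * (real (Suc n) + 1)) = 1 / (12 * real (Suc n)) - 1 / (12 * real (Suc (Suc n)))"
    by simp
  then show "stirling_remainder (Suc n) - 1 / (12 * real (Suc n))
      \<le> stirling_remainder (Suc (Suc n)) - 1 / (12 * real (Suc (Suc n)))"
    using ln_Suc_ratio_bounds(2)[of "real (Suc n)"] stirling_remainder_diff[of "Suc n"] by simp
qed

lemma convergent_stirling_remainder: "convergent (\<lambda>n. stirling_remainder (Suc n))"
proof -
  have "stirling_remainder 1 - 1/12 \<le> stirling_remainder (Suc n) - 1 / (12 * real (Suc n))" for n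
    using incseq_stirling_remainder_minus[THEN incseqD, of 0 n] by simp
  then have "stirling_remainder 1 - 1/12 \<le> stirling_remainder (Suc n)" for n
    by (smt (verit) of_nat_0_le_iff divide_nonneg_nonneg)
  then obtain L where "(\<lambda>n. stirling_remainder (Suc n)) \<longlonglongrightarrow> L"
    using decseq_convergent[OF decseq_stirling_remainder] by blast
  then show ?thesis by (rule convergentI)
qed

lemma wallis_product_closed_form:
  "(\<Prod>k=1..n. 4 * real k^2 / (4 * real k^2 - 1))
     = 2^(4*n) * (fact n)^4 / ((fact (2*n))^2 * (2 * real n + 1))"
proof (induction n)
  case 0
  then show ?case by simp
next
  case (Suc n)
  define x where "x = real n"
  have "(\<Prod>k=1..Suc n. 4 * real k^2 / (4 * real k^2 - 1))
      = (\<Prod>k=1..n. 4 * real k^2 / (4 * real k^2 - 1)) * (4 * (x + 1)^2 / ((2 * x + 1) * (2 * x + 3)))"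
    by (simp add: prod.nat_ivl_Suc' x_def algebra_simps power2_eq_square)
  also have "\<dots> = 2^(4*n) * (fact n)^4 / ((fact (2*n))^2 * (2 * x + 1))
                  * (4 * (x + 1)^2 / ((2 * x + 1) * (2 * x + 3)))"
    using Suc.IH by (simp add: x_def)
  also have "\<dots> = 16 * 2^(4*n) * ((x + 1) * fact n)^4
                  / (((2 * x + 2) * (2 * x + 1) * fact (2 * n))^2 * (2 * x + 3))"
    by (simp add: x_def divide_simps) algebra
  also have "\<dots> = 2^(4 * Suc n) * (fact (Suc n))^4 / ((fact (2 * Suc n))^2 * (2 * real (Suc n) + 1))"
    by (simp add: x_def power_add algebra_simps)
  finally show ?case .
qed

lemma ln_wallis_product:
  assumes "m \<ge> 1"
  shows "ln (\<Prod>k=1..m. 4 * real k^2 / (4 * real k^2 - 1))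
           = 4 * stirling_remainder m - 2 * stirling_remainder (2*m) - ln 2 - ln (2 + 1 / real m)"
proof -
  have m: "real m > 0" using assms by simp
  have "2 * real m + 1 = real m * (2 + 1 / real m)"
    using m by (simp add: field_simps)
  moreover have "0 < 2 + 1 / real m"
    using m by (simp add: add_pos_pos)
  ultimately have "ln (2 * real m + 1) = ln (real m) + ln (2 + 1 / real m)"
    using m by (simp add: ln_mult)
  moreover have "ln (2 * real m) = ln 2 + ln (real m)"
    using m by (simp add: ln_mult)
  moreover have "ln (\<Prod>k=1..m. 4 * real k^2 / (4 * real k^2 - 1))
      = real (4 * m) * ln 2 + 4 * ln (fact m) - (2 * ln (fact (2 * m)) + ln (2 * real m + 1))"
    using m unfolding wallis_product_closed_form by (simp add: ln_div ln_mult ln_realpow)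
  ultimately show ?thesis
    using m by (simp add: stirling_remainder_def algebra_simps)
qed

lemma tendsto_stirling_remainder: "(\<lambda>n. stirling_remainder (Suc n)) \<longlonglongrightarrow> ln (2 * pi) / 2"
proof -
  let ?W = "\<lambda>n. \<Prod>k=1..n. 4 * real k^2 / (4 * real k^2 - 1)"
  obtain C where C: "(\<lambda>n. stirling_remainder (Suc n)) \<longlonglongrightarrow> C"
    using convergent_stirling_remainder by (auto simp: convergent_def)
  have "(\<lambda>n. ?W (Suc n)) \<longlonglongrightarrow> pi / 2"
    using wallis by (rule LIMSEQ_Suc)
  then have wallis_ln: "(\<lambda>n. ln (?W (Suc n))) \<longlonglongrightarrow> ln (pi / 2)"
    by (intro tendsto_ln) auto
  have "(\<lambda>n. stirling_remainder (Suc (2 * n + 1))) \<longlonglongrightarrow> C"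
    using LIMSEQ_subseq_LIMSEQ[OF C, of "\<lambda>n. 2 * n + 1"] by (simp add: strict_mono_def comp_def)
  then have C_double: "(\<lambda>n. stirling_remainder (2 * Suc n)) \<longlonglongrightarrow> C"
    by simp
  have "(\<lambda>n. 2 + 1 / real (Suc n)) \<longlonglongrightarrow> 2 + 0"
    using LIMSEQ_Suc[OF lim_1_over_n] by (intro tendsto_add tendsto_const)
  then have ln_2: "(\<lambda>n. ln (2 + 1 / real (Suc n))) \<longlonglongrightarrow> ln 2"
    by (intro tendsto_ln) auto
  have "(\<lambda>n. 4 * stirling_remainder (Suc n) - 2 * stirling_remainder (2 * Suc n) - ln 2
               - ln (2 + 1 / real (Suc n))) \<longlonglongrightarrow> 4 * C - 2 * C - ln 2 - ln 2"
    by (intro tendsto_diff tendsto_mult tendsto_const C C_double ln_2)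
  moreover have "(\<lambda>n. ln (?W (Suc n))) = (\<lambda>n. 4 * stirling_remainder (Suc n)
      - 2 * stirling_remainder (2 * Suc n) - ln 2 - ln (2 + 1 / real (Suc n)))"
    by (intro ext ln_wallis_product) simp
  ultimately have "(\<lambda>n. ln (?W (Suc n))) \<longlonglongrightarrow> 4 * C - 2 * C - ln 2 - ln 2"
    by simp
  with wallis_ln have "ln (pi / 2) = 2 * C - 2 * ln 2"
    by (simp add: LIMSEQ_unique)
  then have "C = ln (2 * pi) / 2"
    by (simp add: ln_div ln_mult)
  with C show ?thesis by simp
qed

lemma stirling_remainder_bounds:
  assumes "n \<ge> 1"
  shows "ln (2 * pi) / 2 \<le> stirling_remainder n"
    and "stirling_remainder n \<le> ln (2 * pi) / 2 + 1 / (12 * real n)"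
proof -
  obtain m where n: "n = Suc m" using assms by (cases n) auto
  have "(\<lambda>n. (1/12) * (1 / real (Suc n))) \<longlonglongrightarrow> (1/12) * 0"
    by (intro tendsto_mult tendsto_const LIMSEQ_Suc[OF lim_1_over_n])
  then have "(\<lambda>n. stirling_remainder (Suc n) - 1 / (12 * real (Suc n))) \<longlonglongrightarrow> ln (2 * pi) / 2 - 0"
    by (intro tendsto_diff tendsto_stirling_remainder) simp
  from incseq_le[OF incseq_stirling_remainder_minus this, of m]
  show "stirling_remainder n \<le> ln (2 * pi) / 2 + 1 / (12 * real n)"
    using n by simp
  show "ln (2 * pi) / 2 \<le> stirling_remainder n"
    using decseq_ge[OF decseq_stirling_remainder tendsto_stirling_remainder, of m] n by simp
qed

lemma binary_entropy_bound:
  fixes a m k :: real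
  assumes "0 < a" "0 < m" "0 < k"
  shows "(m + k) * ln (m + k) - m * ln m - k * ln k + m * ln a \<le> (m + k) * ln (1 + a)"
proof -
  define n where "n = m + k"
  have n: "0 < n" using assms by (simp add: n_def)
  have "ln n + ln a - ln m - ln (1 + a) = ln (n * a / (m * (1 + a)))"
    using assms n by (simp add: ln_div ln_mult)
  then have "m * (ln n + ln a - ln m - ln (1 + a)) \<le> m * (n * a / (m * (1 + a)) - 1)"
    using assms n by (auto intro!: mult_left_mono ln_le_minus_one)
  moreover have "ln n - ln k - ln (1 + a) = ln (n / (k * (1 + a)))"
    using assms n by (simp add: ln_div ln_mult)
  then have "k * (ln n - ln k - ln (1 + a)) \<le> k * (n / (k * (1 + a)) - 1)"
    using assms n by (auto intro!: mult_left_mono ln_le_minus_one)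
  moreover have "m * (n * a / (m * (1 + a)) - 1) + k * (n / (k * (1 + a)) - 1) = 0"
  proof -
    have "1 + a \<noteq> 0" using assms by simp
    have "n * a / (1 + a) + n / (1 + a) = n * (1 + a) / (1 + a)"
      by (simp add: add_divide_distrib[symmetric] algebra_simps)
    with \<open>1 + a \<noteq> 0\<close> have "n * a / (1 + a) + n / (1 + a) = n" by simp
    then show ?thesis using assms by (simp add: n_def right_diff_distrib)
  qed
  ultimately have "m * (ln n + ln a - ln m - ln (1 + a)) + k * (ln n - ln k - ln (1 + a)) \<le> 0"
    by linarith
  then show ?thesis
    by (simp add: n_def algebra_simps)
qed

lemma binomial_term_stirling_bound:
  fixes a :: real and n m :: nat
  assumes "0 < a" "1 \<le> m" "m < n"
  shows "real (n choose m) * a^m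
           \<le> exp (1 / (12 * real n)) * sqrt (real n / (2 * pi * real m * real (n - m))) * (1 + a)^n"
proof -
  define k where "k = n - m"
  have n_eq: "real n = real m + real k" using assms by (simp add: k_def)
  have pos: "0 < real m" "0 < real k" "0 < real n" using assms by (auto simp: k_def)
  have ge1: "1 \<le> n" "1 \<le> k" using assms by (auto simp: k_def)
  have "real (n choose m) = fact n / (fact m * fact k)"
    using assms by (simp add: k_def binomial_fact)
  then have "ln (real (n choose m) * a^m) = ln (fact n) - ln (fact m) - ln (fact k) + real m * ln a"
    using assms by (simp add: ln_mult ln_div ln_realpow)
  also have "\<dots> \<le> 1 / (12 * real n) + ln (real n) / 2 - ln (2 * pi) / 2 - ln (real m) / 2
                  - ln (real k) / 2 + real n * ln (1 + a)"
    using stirling_remainder_bounds(2)[OF ge1(1)] stirling_remainder_bounds(1)[OF assms(2)]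
      stirling_remainder_bounds(1)[OF ge1(2)] binary_entropy_bound[OF assms(1) pos(1,2), folded n_eq]
      n_eq
    unfolding stirling_remainder_def distrib_right distrib_left by linarith
  also have "\<dots> = ln (exp (1 / (12 * real n)) * sqrt (real n / (2 * pi * real m * real k)) * (1 + a)^n)"
    using assms pos by (simp add: ln_mult ln_div ln_sqrt ln_realpow) (simp add: field_simps)
  finally show ?thesis
    using assms pos by (simp add: k_def)
qed

lemma exp_inverse_six_le:
  fixes x :: real assumes "1 \<le> x"
  shows "exp (1 / (6 * x)) \<le> (x + 1) / x"
proof -
  have "1 / (6 * x) \<le> 1 / (x + 1/2)"
    using assms by (intro divide_left_mono) auto
  also have "\<dots> \<le> ln (x + 1) - ln x"
    using ln_Suc_ratio_bounds(1)[of x] assms by (simp add: field_simps)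
  also have "\<dots> = ln ((x + 1) / x)"
    using assms by (simp add: ln_div)
  finally have "exp (1 / (6 * x)) \<le> exp (ln ((x + 1) / x))"
    by simp
  also have "\<dots> = (x + 1) / x"
    using assms by simp
  finally show ?thesis .
qed

lemma stirling_factor_le_M_bound:
  fixes a lam :: real and n m :: nat
  assumes "0 < a" "lam < 1" "1 \<le> m" "m < n"
    and "exp (1 / (6 * real n)) * real n^2 * a * (1 - lam)^2 \<le> real m * real (n - m) * (1 + a)^2"
  shows "exp (1 / (12 * real n)) * sqrt (real n / (2 * pi * real m * real (n - m)))
           \<le> M_bound a lam / sqrt (2 * pi) / sqrt (real n)"
proof (rule power2_le_imp_le)
  define E k L where "E = exp (1 / (6 * real n))" and "k = real (n - m)" and "L = (1 - lam)^2"
  have pos: "0 < real m" "0 < k" "0 < real n" "0 < L" "0 < E"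
    using assms by (auto simp: k_def L_def E_def)
  have "(exp (1 / (12 * real n)) * sqrt (real n / (2 * pi * real m * real (n - m))))^2
      = E * real n / (2 * pi * real m * k)"
    using pos by (simp add: power_mult_distrib exp_double[symmetric] E_def k_def)
  also have "\<dots> = (E * real n^2 * a * L) / (2 * pi * real m * k * real n * a * L)"
    using pos assms(1) by (simp add: field_simps power2_eq_square)
  also have "\<dots> \<le> (real m * k * (1 + a)^2) / (2 * pi * real m * k * real n * a * L)"
    using assms(5) pos assms(1) unfolding E_def k_def L_def by (intro divide_right_mono) auto
  also have "\<dots> = (a + 1)^2 / (a * L) / (2 * pi) / real n"
    using pos assms(1) by (simp add: field_simps)
  also have "\<dots> = (M_bound a lam / sqrt (2 * pi) / sqrt (real n))^2"
    using pos assms(1) by (simp add: M_bound_def L_def power_divide power_mult_distrib)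
  finally show "(exp (1 / (12 * real n)) * sqrt (real n / (2 * pi * real m * real (n - m))))^2
      \<le> (M_bound a lam / sqrt (2 * pi) / sqrt (real n))^2" .
  show "0 \<le> M_bound a lam / sqrt (2 * pi) / sqrt (real n)"
    unfolding M_bound_def using assms(1,2) by (intro divide_nonneg_nonneg mult_nonneg_nonneg) auto
qed

definition binomial_mode :: "real \<Rightarrow> nat \<Rightarrow> nat" where
  "binomial_mode a n = nat \<lfloor>(real n + 1) * a / (1 + a)\<rfloor>"

lemma binomial_mode_bounds:
  fixes a :: real assumes "0 \<le> a"
  shows "real (binomial_mode a n) \<le> (real n + 1) * a / (1 + a)"
    and "(real n + 1) * a / (1 + a) < real (binomial_mode a n) + 1"
proof -
  have "0 \<le> (real n + 1) * a / (1 + a)" using assms by simp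
  then have "real (binomial_mode a n) = of_int \<lfloor>(real n + 1) * a / (1 + a)\<rfloor>"
    by (simp add: binomial_mode_def)
  then show "real (binomial_mode a n) \<le> (real n + 1) * a / (1 + a)"
    and "(real n + 1) * a / (1 + a) < real (binomial_mode a n) + 1"
    by linarith+
qed

lemma unimodal_le_peak:
  fixes f :: "nat \<Rightarrow> 'a::preorder"
  assumes up: "\<And>j. j < m \<Longrightarrow> f j \<le> f (Suc j)"
    and down: "\<And>j. m \<le> j \<Longrightarrow> j < n \<Longrightarrow> f (Suc j) \<le> f j"
    and "k \<le> n"
  shows "f k \<le> f m"
proof (cases "k \<le> m")
  case True
  then show ?thesis
  proof (induction k rule: inc_induct)
    case (step j)
    then show ?case using up order_trans by blast
  qed simp
next
  case False
  then have "m \<le> k" by simp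
  then show ?thesis
  proof (induction k rule: dec_induct)
    case (step j)
    then show ?case using down \<open>k \<le> n\<close> order_trans by fastforce
  qed simp
qed

lemma Suc_times_binomial_Suc_eq: "Suc k * (n choose Suc k) = (n - k) * (n choose k)"
proof -
  have "Suc k * (n choose Suc k) = n * ((n - 1) choose k)"
    using times_binomial_minus1_eq[of "Suc k" n] by simp
  also have "\<dots> = (n - k) * (n choose k)"
    by (rule binomial_absorb_comp[symmetric])
  finally show ?thesis .
qed

lemma binomial_term_le_mode:
  fixes a :: real assumes "0 < a" "k \<le> n"
  shows "real (n choose k) * a^k \<le> real (n choose binomial_mode a n) * a^binomial_mode a n"
proof -
  define f where "f j = real (n choose j) * a^j" for j
  define m where "m = binomial_mode a n"
  have f_nonneg: "0 \<le> f j" for j using assms by (simp add: f_def)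
  have f_Suc: "real (Suc j) * f (Suc j) = (real n - real j) * a * f j" if "j \<le> n" for j
  proof -
    have "real (Suc j) * real (n choose Suc j) = real (n - j) * real (n choose j)"
      using Suc_times_binomial_Suc_eq[of j n] by (metis of_nat_mult)
    then show ?thesis using that by (simp add: f_def of_nat_diff)
  qed
  have m_le: "real m \<le> (real n + 1) * a / (1 + a)" and m_gt: "(real n + 1) * a / (1 + a) < real m + 1"
    using binomial_mode_bounds[of a n] assms by (simp_all add: m_def)
  have "(real n + 1) * a / (1 + a) < real n + 1"
    using assms by (simp add: field_simps)
  then have "m \<le> n" using m_le by linarith
  have "f j \<le> f (Suc j)" if "j < m" for j
  proof -
    have "real (Suc j) \<le> (real n + 1) * a / (1 + a)" using that m_le by linarith
    then have "real (Suc j) \<le> (real n - real j) * a"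
      using assms by (simp add: field_simps)
    then have "real (Suc j) * f j \<le> real (Suc j) * f (Suc j)"
      using f_Suc[of j] that \<open>m \<le> n\<close> f_nonneg[of j] by (simp add: mult_right_mono)
    then show ?thesis by simp
  qed
  moreover have "f (Suc j) \<le> f j" if "m \<le> j" "j < n" for j
  proof -
    have "(real n + 1) * a / (1 + a) < real (Suc j)" using that m_gt by linarith
    then have "(real n - real j) * a \<le> real (Suc j)"
      using assms by (simp add: field_simps)
    then have "real (Suc j) * f (Suc j) \<le> real (Suc j) * f j"
      using f_Suc[of j] that f_nonneg[of j] by (simp add: mult_right_mono)
    then show ?thesis by simp
  qed
  ultimately have "f k \<le> f m"
    using unimodal_le_peak[of m f n k] assms(2) by blast
  then show ?thesis by (simp add: f_def m_def)
qed

lemma binomial_mode_range: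
  fixes a :: real
  assumes "0 < a" "1 < real n * a" "a < real n"
  shows "1 \<le> binomial_mode a n" and "binomial_mode a n < n"
proof -
  have "1 \<le> (real n + 1) * a / (1 + a)" and "(real n + 1) * a / (1 + a) < real n"
    using assms by (simp_all add: field_simps)
  then show "1 \<le> binomial_mode a n" and "binomial_mode a n < n"
    using binomial_mode_bounds[of a n] assms(1) by linarith+
qed

lemma mult_diff_ge_min_endpoints:
  fixes lo u hi S :: real
  assumes "lo \<le> u" "u \<le> hi"
  shows "min (lo * (S - lo)) (hi * (S - hi)) \<le> u * (S - u)"
proof (cases "lo + u \<le> S")
  case True
  have "u * (S - u) - lo * (S - lo) = (u - lo) * (S - u - lo)" by (simp add: algebra_simps)
  also have "\<dots> \<ge> 0" using True assms by simp
  finally show ?thesis by linarith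
next
  case False
  have "u * (S - u) - hi * (S - hi) = (hi - u) * (u + hi - S)" by (simp add: algebra_simps)
  also have "\<dots> \<ge> 0" using False assms by simp
  finally show ?thesis by linarith
qed

lemma binomial_mode_product_ge:
  fixes a lam :: real and n :: nat
  assumes a: "0 < a" and lam: "0 < lam" "lam < 1"
    and n_lam: "a < real n * lam" "1 < real n * lam * a"
  shows "exp (1 / (6 * real n)) * real n^2 * a * (1 - lam)^2
           \<le> real (binomial_mode a n) * real (n - binomial_mode a n) * (1 + a)^2"
proof -
  define m where "m = binomial_mode a n"
  \<comment> \<open>(1 + a)^2 m (n - m) = u (S - u), and the mode pins u between n a - 1 and n a + a\<close>
  define u S where "u = (1 + a) * real m" and "S = (1 + a) * real n"
  have "real n * lam \<le> real n" using lam by (simp add: mult_left_le)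
  then have "a < real n" and "1 < real n * a"
    using n_lam a mult_right_mono[of "real n * lam" "real n" a] by linarith+
  then have "m < n"
    using binomial_mode_range(2)[OF a] by (simp add: m_def)
  then have n_pos: "1 \<le> real n" by simp
  have lo: "real n * a - 1 \<le> u" and hi: "u \<le> real n * a + a"
    using binomial_mode_bounds[of a n] a by (simp_all add: m_def u_def field_simps)
  have "exp (1 / (6 * real n)) * real n^2 \<le> (real n + 1) / real n * real n^2"
    using exp_inverse_six_le[OF n_pos] by (intro mult_right_mono) auto
  also have "\<dots> = (real n + 1) * real n" using n_pos by (simp add: power2_eq_square)
  finally have "exp (1 / (6 * real n)) * real n^2 * a * (1 - lam)^2
      \<le> (real n + 1) * real n * a * (1 - lam)^2"
    using a by (intro mult_right_mono) auto
  also have "\<dots> \<le> min ((real n * a - 1) * (S - (real n * a - 1))) ((real n * a + a) * (S - (real n * a + a)))"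
  proof -
    have sq: "(1 - lam)^2 \<le> 1 - lam" using lam by (simp add: power2_eq_square mult_left_le)
    have "real n * a * (1 - lam)^2 \<le> real n * a * (1 - lam)"
      using sq n_pos a by (intro mult_left_mono) auto
    also have "\<dots> \<le> real n * a - 1"
      using n_lam(2) by (simp add: algebra_simps)
    finally have lower_end: "(real n + 1) * (real n * a * (1 - lam)^2) \<le> (real n + 1) * (real n * a - 1)"
      using n_pos by (intro mult_left_mono) auto
    have "real n * (1 - lam)^2 \<le> real n * (1 - lam)"
      using sq n_pos by (intro mult_left_mono) auto
    also have "\<dots> \<le> real n - a"
      using n_lam(1) by (simp add: algebra_simps)
    finally have upper_end: "(a * (real n + 1)) * (real n * (1 - lam)^2) \<le> (a * (real n + 1)) * (real n - a)"
      using n_pos a by (intro mult_left_mono) auto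
    have "(real n * a - 1) * (S - (real n * a - 1)) = (real n + 1) * (real n * a - 1)"
      and "(real n * a + a) * (S - (real n * a + a)) = (a * (real n + 1)) * (real n - a)"
      by (simp_all add: S_def algebra_simps)
    with lower_end upper_end show ?thesis
      by (simp add: algebra_simps)
  qed
  also have "\<dots> \<le> u * (S - u)"
    using lo hi by (rule mult_diff_ge_min_endpoints)
  also have "\<dots> = real m * real (n - m) * (1 + a)^2"
    using \<open>m < n\<close> by (simp add: u_def S_def of_nat_diff algebra_simps power2_eq_square)
  finally show ?thesis by (simp add: m_def)
qed

lemma binomial_term_le_M_bound:
  fixes a lam :: real and n k :: nat
  assumes "0 < a" "0 < lam" "lam < 1" "a < real n * lam" "1 < real n * lam * a" "k \<le> n"
  shows "real (n choose k) * a^k \<le> M_bound a lam / sqrt (2 * pi) / sqrt (real n) * (1 + a)^n"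
proof -
  define m where "m = binomial_mode a n"
  have "real n * lam \<le> real n" using assms(3) by (simp add: mult_left_le)
  then have "a < real n" and "1 < real n * a"
    using assms(1,4,5) mult_right_mono[of "real n * lam" "real n" a] by linarith+
  then have m: "1 \<le> m" "m < n"
    using binomial_mode_range[OF assms(1)] by (simp_all add: m_def)
  have "real (n choose k) * a^k \<le> real (n choose m) * a^m"
    using binomial_term_le_mode[OF assms(1,6)] by (simp add: m_def)
  also have "\<dots> \<le> exp (1 / (12 * real n)) * sqrt (real n / (2 * pi * real m * real (n - m))) * (1 + a)^n"
    using binomial_term_stirling_bound[OF assms(1) m] .
  also have "\<dots> \<le> M_bound a lam / sqrt (2 * pi) / sqrt (real n) * (1 + a)^n"
    using stirling_factor_le_M_bound[OF assms(1,3) m] binomial_mode_product_ge[OF assms(1-5)] assms(1)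
    by (intro mult_right_mono) (auto simp: m_def)
  finally show ?thesis .
qed

lemma sum_power_le_bound_power_mult_sum:
  fixes c :: "'a \<Rightarrow> 'b::linordered_semidom"
  assumes "\<And>i. i \<in> I \<Longrightarrow> 0 \<le> c i" "\<And>i. i \<in> I \<Longrightarrow> c i \<le> B" "1 \<le> d"
  shows "(\<Sum>i\<in>I. c i ^ d) \<le> B^(d - 1) * (\<Sum>i\<in>I. c i)"
proof -
  have "(\<Sum>i\<in>I. c i ^ d) = (\<Sum>i\<in>I. c i ^ (d - 1) * c i)"
    using assms(3) by (intro sum.cong refl) (simp add: power_Suc2[symmetric])
  also have "\<dots> \<le> (\<Sum>i\<in>I. B^(d - 1) * c i)"
    using assms(1,2) by (intro sum_mono mult_right_mono power_mono) auto
  also have "\<dots> = B^(d - 1) * (\<Sum>i\<in>I. c i)"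
    by (simp add: sum_distrib_left)
  finally show ?thesis .
qed

lemma N_bound_le_imp:
  fixes a lam :: real
  assumes "0 < a" "0 < lam" "N_bound a lam \<le> n"
  shows "a < real n * lam" and "1 < real n * lam * a"
proof -
  have "\<lfloor>a / lam\<rfloor> + 1 \<le> int n" and "\<lfloor>1 / (lam * a)\<rfloor> + 1 \<le> int n"
    using assms(3) by (auto simp: N_bound_def)
  then have "a / lam < real n" and "1 / (lam * a) < real n"
    by linarith+
  then show "a < real n * lam" and "1 < real n * lam * a"
    using assms(1,2) by (simp_all add: field_simps)
qed

lemma inverse_sqrt_power_eq_powr:
  fixes x :: real assumes "0 < x"
  shows "(1 / sqrt x)^k = x powr (- real k / 2)"
  using assms by (simp add: powr_minus_divide powr_half_sqrt[symmetric] powr_powr powr_realpow[symmetric]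
    power_one_over)

lemma sum_binomial_term_powers_le:
  fixes a lam :: real and n d :: nat
  assumes a: "0 < a" and lam: "0 < lam" "lam < 1"
    and n_lam: "a < real n * lam" "1 < real n * lam * a" and d: "1 \<le> d"
  shows "(\<Sum>k=0..n. (real (n choose k) * a^k) ^ d)
           \<le> (M_bound a lam / sqrt (2 * pi))^(d - 1) * real n powr (- (real d - 1) / 2) * (1 + a)^(d * n)"
proof -
  define B where "B = M_bound a lam / sqrt (2 * pi) * (1 / sqrt (real n)) * (1 + a)^n"
  have "0 < real n * lam" using a n_lam by linarith
  then have "0 < real n" using lam by (simp add: zero_less_mult_iff)
  have "(\<Sum>k=0..n. (real (n choose k) * a^k) ^ d) \<le> B^(d - 1) * (\<Sum>k=0..n. real (n choose k) * a^k)"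
    using binomial_term_le_M_bound[OF a lam n_lam] a d
    by (intro sum_power_le_bound_power_mult_sum) (auto simp: B_def)
  also have "(\<Sum>k=0..n. real (n choose k) * a^k) = (1 + a)^n"
    using binomial_ring[of a 1 n] by (simp add: atLeast0AtMost add.commute)
  also have "B^(d - 1) * (1 + a)^n
      = (M_bound a lam / sqrt (2 * pi))^(d - 1) * (1 / sqrt (real n))^(d - 1) * (1 + a)^(d * n)"
  proof -
    have "((1 + a)^n)^(d - 1) * (1 + a)^n = (1 + a)^(n * (d - 1) + n)"
      by (simp add: power_mult power_add)
    also have "n * (d - 1) + n = d * n" using d by (cases d) auto
    finally show ?thesis
      unfolding B_def power_mult_distrib by (simp add: mult.assoc[symmetric] mult.commute[of _ "(1 + a)^n"])
  qed
  also have "(1 / sqrt (real n))^(d - 1) = real n powr (- (real d - 1) / 2)"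
    using \<open>0 < real n\<close> d by (simp add: inverse_sqrt_power_eq_powr of_nat_diff)
  finally show ?thesis .
qed

theorem proposition14:
  fixes d n :: nat and p :: "nat \<Rightarrow> real" and lam :: real
  assumes "d \<ge> 3"
    and "\<And>j. j \<in> {1..d} \<Longrightarrow> 0 < p j \<and> p j < 1"
    and "0 < lam" "lam < 1"
    and "n \<ge> N_bound ((\<Prod>j=1..d. p j / (1 - p j)) powr (1 / real d)) lam"
  shows "(\<Sum>k=0..n. real (n choose k) ^ d * (\<Prod>j=1..d. p j / (1 - p j)) ^ k)
    \<le> (M_bound ((\<Prod>j=1..d. p j / (1 - p j)) powr (1 / real d)) lam / sqrt (2 * pi)) ^ (d - 1)
       * real n powr (- (real d - 1) / 2)
       * (1 + (\<Prod>j=1..d. p j / (1 - p j)) powr (1 / real d)) ^ (d * n)"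
proof -
  define P where "P = (\<Prod>j=1..d. p j / (1 - p j))"
  define a where "a = P powr (1 / real d)"
  have "0 < P" unfolding P_def using assms(2) by (intro prod_pos) auto
  then have a: "0 < a" and a_pow: "a^d = P"
    using assms(1) by (simp_all add: a_def powr_realpow[symmetric] powr_powr)
  have n_lam: "a < real n * lam" "1 < real n * lam * a"
    using N_bound_le_imp[OF a assms(3)] assms(5) by (simp_all add: a_def P_def)
  have "(\<Sum>k=0..n. real (n choose k) ^ d * P ^ k) = (\<Sum>k=0..n. (real (n choose k) * a^k) ^ d)"
    by (simp add: power_mult_distrib a_pow[symmetric] power_mult[symmetric] mult.commute)
  also have "\<dots> \<le> (M_bound a lam / sqrt (2 * pi))^(d - 1) * real n powr (- (real d - 1) / 2) * (1 + a)^(d * n)"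
    using sum_binomial_term_powers_le[OF a assms(3,4) n_lam] assms(1) by simp
  finally show ?thesis by (simp add: P_def a_def)
qed

end
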